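(* Let $X$ be a Banach space, $\alpha\in\mathbb{R}$ with $\alpha\ne0$, $0<\mu\le1$, $\beta\ge0$, and let $A=\rho I$ for some $\rho\in\mathbb{R}$. Assume that $\alpha>0$, or that $\alpha<0$ and $\alpha+\beta^\mu\ge|\alpha|$. Then the strongly continuous exponentially bounded $(\alpha,\beta,\mu)$-resolvent family associated with $$u'(t)=\rho u(t)+\frac{\rho\alpha}{\Gamma(\mu)}\int_0^te^{-\beta(t-s)}(t-s)^{\mu-1}u(s)\,ds,\ t>0,\qquad u(0)=u_0,$$ is given by $$S_{\alpha,\beta}^\mu(t)=e^{-\beta t}\sum_{k=0}^\infty(\rho+\beta)^kt^kE^{(k+1)}_{\mu+1,k+1}(\alpha\rho t^{\mu+1}),\quad t\ge0,$$ provided that the series converges, where $E^{(k+1)}_{\mu+1,k+1}(z)=\sum_{n=0}^\infty\frac{(k+n)!\,z^n}{n!\,k!\,\Gamma(n\mu+k+n+1)}$, $z\in\mathbb{C}$.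
   Context: Kernel: $\kappa(t)=\alpha e^{-\beta t}\frac{t^{\mu-1}}{\Gamma(\mu)}$, $t>0$, $(1\ast\kappa)(t)=\int_0^t\kappa(s)ds$. The $(\alpha,\beta,\mu)$-resolvent family generated by $A$ is a strongly continuous family $(S_{\alpha,\beta}^\mu(t))_{t\ge0}$ of bounded operators with $S_{\alpha,\beta}^\mu(0)=I$, commuting with $A$ on $D(A)$, and satisfying $S_{\alpha,\beta}^\mu(t)x=x+\int_0^t(1+1\ast\kappa)(t-s)AS_{\alpha,\beta}^\mu(s)x\,ds$ for $x\in D(A)$, $t\ge0$; the solution of the equation $u'(t)=Au(t)+\int_0^t\kappa(t-s)Au(s)ds$, $u(0)=u_0$, is $u(t)=S_{\alpha,\beta}^\mu(t)u_0$. Exponentially bounded means $\|S_{\alpha,\beta}^\mu(t)\|\le Me^{\widetilde\omega t}$ for some $M>0$, $\widetilde\omega\in\mathbb{R}$. *)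

theory Defs
  imports "HOL-Analysis.Analysis"
begin

definition kernel :: "real \<Rightarrow> real \<Rightarrow> real \<Rightarrow> real \<Rightarrow> real" where
  "kernel \<alpha> \<beta> \<mu> t = \<alpha> * exp (- \<beta> * t) * t powr (\<mu> - 1) / Gamma \<mu>"

definition kernel_int :: "real \<Rightarrow> real \<Rightarrow> real \<Rightarrow> real \<Rightarrow> real" where
  "kernel_int \<alpha> \<beta> \<mu> t = integral {0..t} (kernel \<alpha> \<beta> \<mu>)"

definition resolvent_family ::
  "real \<Rightarrow> real \<Rightarrow> real \<Rightarrow> 'a::banach set \<Rightarrow> ('a \<Rightarrow> 'a) \<Rightarrow> (real \<Rightarrow> ('a \<Rightarrow>\<^sub>L 'a)) \<Rightarrow> bool" where
  "resolvent_family \<alpha> \<beta> \<mu> D A S \<longleftrightarrow>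
     (\<forall>x. continuous_on {0..} (\<lambda>t. S t x)) \<and>
     S 0 = id_blinfun \<and>
     (\<forall>t\<ge>0. \<forall>x\<in>D. S t x \<in> D \<and> A (S t x) = S t (A x)) \<and>
     (\<forall>t\<ge>0. \<forall>x\<in>D.
        ((\<lambda>s. (1 + kernel_int \<alpha> \<beta> \<mu> (t - s)) *\<^sub>R A (S s x)) has_integral (S t x - x)) {0..t})"

definition exp_bounded :: "(real \<Rightarrow> ('a::real_normed_vector \<Rightarrow>\<^sub>L 'a)) \<Rightarrow> bool" where
  "exp_bounded S \<longleftrightarrow> (\<exists>M>0. \<exists>\<omega>. \<forall>t\<ge>0. norm (S t) \<le> M * exp (\<omega> * t))"

text \<open>Three-parameter (Prabhakar) Mittag-Leffler function
  E^gamma_{a,b}(z) = sum_n (gamma)_n z^n / (n! Gamma(a n + b)); for gamma = k+1,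
  (k+1)_n = (k+n)!/k!.\<close>
definition prabhakar_ML :: "real \<Rightarrow> real \<Rightarrow> real \<Rightarrow> real \<Rightarrow> real" where
  "prabhakar_ML \<gamma> a b z = (\<Sum>n. pochhammer \<gamma> n / (fact n * Gamma (a * real n + b)) * z ^ n)"

end

theory Submission
  imports Defs
begin

text \<open>Since \<open>A = \<rho> I\<close>, the family \<open>s(t) I\<close> is a resolvent family as soon as the scalar function
  \<open>s\<close> is continuous, \<open>s(0) = 1\<close> and \<open>s(t) - 1 = \<integral>\<^sub>0\<^sup>t (1 + (1 * \<kappa>)(t - u)) \<rho> s(u) du\<close>.
  Expanding the Prabhakar functions gives \<open>s(t) = exp(-\<beta>t) g(t)\<close> with
  \<open>g(t) = \<Sum>\<^sub>k \<Sum>\<^sub>n c^k d^n C(k+n,n) t^(k+en) / \<Gamma>(k+en+1)\<close>, \<open>c = \<rho> + \<beta>\<close>, \<open>d = \<alpha>\<rho>\<close>, \<open>e = \<mu> + 1\<close>.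
  Convolving power kernels adds their orders (a Beta integral), so Pascal's rule for \<open>C(k+n,n)\<close>
  gives \<open>g = 1 + c (1 * g) + d (k\<^sub>\<mu> * g)\<close> with \<open>k\<^sub>\<mu>(t) = t^\<mu> / \<Gamma>(\<mu>+1)\<close>. Multiplying by
  \<open>exp(-\<beta>t)\<close> and integrating once more yields the scalar equation, because
  \<open>1 * \<kappa> = \<alpha> (a + \<beta> (1 * a))\<close> for \<open>a(t) = exp(-\<beta>t) k\<^sub>\<mu>(t)\<close>. The terms of the double series
  are dominated by \<open>exp(\<lambda>t) q\<^sub>1^k q\<^sub>2^n\<close> with \<open>q\<^sub>1, q\<^sub>2 \<le> 1/2\<close>, which gives convergence for all
  parameters, termwise integration and the exponential bound. Uniqueness holds because the
  difference of two resolvent families solves a homogeneous Volterra equation with bounded kernel.\<close>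

section \<open>Power kernels\<close>

lemma powr_le_exp_Gamma:
  fixes x p :: real assumes x: "x \<ge> 0" and p: "p \<ge> 0"
  shows "x powr p \<le> exp 2 * Gamma (p + 1) * exp x"
proof -
  have G: "((\<lambda>t. t powr p / exp t) has_integral Gamma (p+1)) {0..}"
    using Gamma_integral_real[of "p+1"] p by simp
  have "integral {x+1..x+2} (\<lambda>t. t powr p / exp t) \<le> integral {0..} (\<lambda>t. t powr p / exp t)"
    by (rule integral_subset_le) (use x G in \<open>auto intro!: integrable_continuous_interval continuous_intros\<close>)
  then have upper: "integral {x+1..x+2} (\<lambda>t. t powr p / exp t) \<le> Gamma (p+1)"
    using G by (simp add: integral_unique)
  have lower: "integral {x+1..x+2} (\<lambda>t. x powr p / exp (x+2)) \<le> integral {x+1..x+2} (\<lambda>t. t powr p / exp t)"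
  proof (rule integral_le)
    fix t assume t: "t \<in> {x+1..x+2}"
    have "x powr p \<le> t powr p" using t x p by (intro powr_mono2) auto
    moreover have "exp t \<le> exp (x+2)" using t by simp
    ultimately show "x powr p / exp (x+2) \<le> t powr p / exp t"
      by (intro frac_le) auto
  qed (use x in \<open>auto intro!: integrable_continuous_interval continuous_intros\<close>)
  have "x powr p / exp (x+2) \<le> Gamma (p+1)" using lower upper by simp
  then show ?thesis by (simp add: exp_add field_simps mult.commute)
qed

text \<open>The Riemann--Liouville kernel of order \<open>p + 1\<close>; the case split enforces \<open>0\<^sup>0 = 1\<close>,
  since \<open>0 powr 0 = 0\<close>.\<close>
definition power_kernel :: "real \<Rightarrow> real \<Rightarrow> real" where
  "power_kernel p t = (if p = 0 then 1 else t powr p) / Gamma (p + 1)"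

lemma power_kernel_pos_order: "p \<noteq> 0 \<Longrightarrow> power_kernel p t = t powr p / Gamma (p + 1)"
  by (simp add: power_kernel_def)

lemma power_kernel_0_order [simp]: "power_kernel 0 t = 1"
  by (simp add: power_kernel_def)

lemma power_kernel_at_0: "p > 0 \<Longrightarrow> power_kernel p 0 = 0"
  by (simp add: power_kernel_def)

lemma power_kernel_nonneg: "p \<ge> 0 \<Longrightarrow> power_kernel p t \<ge> 0"
  by (simp add: power_kernel_def Gamma_real_pos)

lemma continuous_on_power_kernel:
  assumes "p \<ge> 0" shows "continuous_on {0..} (power_kernel p)"
proof (cases "p = 0")
  case False
  with assms have "continuous_on {0..} (\<lambda>t::real. t powr p)"
    by (intro continuous_on_powr') (auto intro: continuous_intros)
  moreover have "Gamma (p + 1) > 0" using assms by (intro Gamma_real_pos) simp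
  ultimately show ?thesis
    using False by (auto simp: power_kernel_def[abs_def] intro!: continuous_on_divide)
qed (simp add: power_kernel_def[abs_def])

lemma continuous_on_power_kernel_compose:
  assumes "p \<ge> 0" "continuous_on S f" "\<And>x. x \<in> S \<Longrightarrow> f x \<ge> 0"
  shows "continuous_on S (\<lambda>x. power_kernel p (f x))"
  using continuous_on_compose2[OF continuous_on_power_kernel[OF assms(1)] assms(2)] assms(3) by auto

lemma power_kernel_le_exp:
  assumes t: "t \<ge> 0" and p: "p \<ge> 0" and l: "l > 0"
  shows "power_kernel p t \<le> exp 2 * exp (l * t) / l powr p"
proof (cases "p = 0")
  case True
  have "1 \<le> exp (2 + l * t)" using t l by simp
  then show ?thesis using True l by (simp add: exp_add)
next
  case False
  have G: "Gamma (p + 1) > 0" using p by (intro Gamma_real_pos) simp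
  have "l powr p * t powr p = (l * t) powr p" using t l by (simp add: powr_mult)
  also have "\<dots> \<le> exp 2 * Gamma (p + 1) * exp (l * t)"
    using powr_le_exp_Gamma[of "l * t" p] t p l by simp
  finally have "t powr p \<le> exp 2 * Gamma (p + 1) * exp (l * t) / l powr p"
    using l by (simp add: field_simps)
  then show ?thesis
    using False G by (simp add: power_kernel_def divide_right_mono field_simps)
qed

lemma has_integral_power_kernel_convolution:
  assumes a: "a \<ge> 0" and p: "p \<ge> 0" and t: "t \<ge> 0"
  shows "((\<lambda>s. power_kernel a (t - s) * power_kernel p s) has_integral power_kernel (a + p + 1) t) {0..t}"
proof (cases "t = 0")
  case True
  then show ?thesis
    using has_integral_refl(2)[of "\<lambda>s. power_kernel a (t - s) * power_kernel p s" 0] a p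
    by (simp add: power_kernel_at_0)
next
  case False
  with t have t: "t > 0" by simp
  define F where "F v = v powr p * (1 - v) powr a" for v :: real
  have "(F has_integral Beta (p+1) (a+1)) {0..1}"
    using has_integral_Beta_real[of "p+1" "a+1"] a p by (simp add: F_def[abs_def])
  then have "((\<lambda>x. F ((1/t) * x)) has_integral t * Beta (p+1) (a+1)) ((\<lambda>x. x / (1/t)) ` {0..1})"
    using has_integral_stretch_real_iff[of "1/t" F "t * Beta (p+1) (a+1)" 0 1] t by simp
  moreover have "(\<lambda>x. x / (1 / t)) ` {0..1} = {0..t}"
    using t by (auto simp: image_iff field_simps intro!: bexI[where x = "_ / t"])
  ultimately have stretched: "((\<lambda>x. F (x / t)) has_integral t * Beta (p+1) (a+1)) {0..t}"
    by simp
  define C where "C = t powr (a + p) / (Gamma (a+1) * Gamma (p+1))"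
  have Gpos: "Gamma (1 + a) > 0" "Gamma (1 + p) > 0" "Gamma (a + (p + 2)) > 0"
    using a p by (auto intro!: Gamma_real_pos)
  have closed_form: "C * (t * Beta (p+1) (a+1)) = power_kernel (a + p + 1) t"
  proof -
    have "C * (t * Beta (p+1) (a+1)) = t powr (a + p) * t / Gamma (a + p + 2)"
      unfolding C_def Beta_def using Gpos by (simp add: field_simps add_ac)
    also have "\<dots> = power_kernel (a + p + 1) t"
      using t a p by (simp add: power_kernel_pos_order powr_add add_ac)
    finally show ?thesis .
  qed
  show ?thesis
  proof (rule has_integral_spike_finite[of "{0, t}"])
    show "((\<lambda>x. C * F (x / t)) has_integral power_kernel (a + p + 1) t) {0..t}"
      using has_integral_mult_right[OF stretched, of C] closed_form by simp
  next
    fix s assume "s \<in> {0..t} - {0, t}"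
    then have s: "s > 0" "s < t" by auto
    have "t - s = t * (1 - s/t)" "s = t * (s/t)" using t by (simp_all add: field_simps)
    then have "(t - s) powr a = t powr a * (1 - s/t) powr a" "s powr p = t powr p * (s/t) powr p"
      using t s by (metis less_eq_real_def divide_nonneg_nonneg diff_ge_0_iff_ge divide_le_eq_1_pos powr_mult)+
    then show "power_kernel a (t - s) * power_kernel p s = C * F (s / t)"
      using s unfolding C_def F_def power_kernel_def by (simp add: powr_add field_simps)
  qed simp
qed

section \<open>Geometrically dominated double series\<close>

lemma weierstrass_series_integral:
  fixes u :: "nat \<Rightarrow> real \<Rightarrow> real"
  assumes cont: "\<And>n. continuous_on {a..b} (u n)"
    and bound: "\<And>n x. x \<in> {a..b} \<Longrightarrow> \<bar>u n x\<bar> \<le> M n" and M: "summable M"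
  shows "((\<lambda>x. \<Sum>n. u n x) has_integral (\<Sum>n. integral {a..b} (u n))) {a..b}"
    and "continuous_on {a..b} (\<lambda>x. \<Sum>n. u n x)"
proof -
  have U: "uniform_limit {a..b} (\<lambda>n x. \<Sum>i<n. u i x) (\<lambda>x. \<Sum>i. u i x) sequentially"
    by (rule Weierstrass_m_test[OF _ M]) (use bound in auto)
  have C: "\<And>n. continuous_on {a..b} (\<lambda>x. \<Sum>i<n. u i x)"
    by (intro continuous_intros cont)
  show "continuous_on {a..b} (\<lambda>x. \<Sum>n. u n x)"
    by (rule uniform_limit_theorem[OF _ U]) (use C in auto)
  obtain I J where I: "\<And>n. ((\<lambda>x. \<Sum>i<n. u i x) has_integral I n) {a..b}"
    and J: "((\<lambda>x. \<Sum>i. u i x) has_integral J) {a..b}" and lim: "I \<longlonglongrightarrow> J"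
    using uniform_limit_integral[OF U C] by auto
  have "I = (\<lambda>n. \<Sum>i<n. integral {a..b} (u i))"
  proof
    fix n
    have "((\<lambda>x. \<Sum>i<n. u i x) has_integral (\<Sum>i<n. integral {a..b} (u i))) {a..b}"
      by (intro has_integral_sum) (auto intro: integrable_integral integrable_continuous_interval cont)
    then show "I n = (\<Sum>i<n. integral {a..b} (u i))"
      using I[of n] by (rule has_integral_unique[symmetric])
  qed
  then have "(\<lambda>n. integral {a..b} (u n)) sums J"
    unfolding sums_def using lim by simp
  then show "((\<lambda>x. \<Sum>n. u n x) has_integral (\<Sum>n. integral {a..b} (u n))) {a..b}"
    using J by (simp add: sums_iff)
qed

context
  fixes q1 q2 :: real
  assumes q1: "0 \<le> q1" "q1 < 1" and q2: "0 \<le> q2" "q2 < 1"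
begin

lemma double_suminf_summable:
  fixes X :: "nat \<Rightarrow> nat \<Rightarrow> real"
  assumes X: "\<And>k n. \<bar>X k n\<bar> \<le> C * q1^k * q2^n"
  shows "summable (\<lambda>n. X k n)" and "\<bar>\<Sum>n. X k n\<bar> \<le> C / (1 - q2) * q1^k"
    and "summable (\<lambda>k. \<Sum>n. X k n)" and "\<bar>\<Sum>k. \<Sum>n. X k n\<bar> \<le> C / ((1 - q1) * (1 - q2))"
proof -
  have g1: "summable (\<lambda>k. q1^k)" "(\<Sum>k. q1^k) = 1 / (1 - q1)"
    using q1 by (simp_all add: summable_geometric suminf_geometric)
  have g2: "summable (\<lambda>n. q2^n)" "(\<Sum>n. q2^n) = 1 / (1 - q2)"
    using q2 by (simp_all add: summable_geometric suminf_geometric)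
  have major: "summable (\<lambda>n. C * q1^k * q2^n)" for k
    using g2 by (intro summable_mult)
  show inner: "summable (\<lambda>n. X k n)" for k
    by (rule summable_comparison_test'[OF major, where N=0]) (use X in simp)
  have "norm (\<Sum>n. X k n) \<le> (\<Sum>n. C * q1^k * q2^n)" for k
    by (rule norm_suminf_le[OF _ major]) (use X in simp)
  also have "(\<Sum>n. C * q1^k * q2^n) = C / (1 - q2) * q1^k" for k
    using suminf_mult[OF g2(1), of "C * q1^k"] g2(2) by simp
  finally show row: "\<bar>\<Sum>n. X k n\<bar> \<le> C / (1 - q2) * q1^k" for k by simp
  have major': "summable (\<lambda>k. C / (1 - q2) * q1^k)"
    using g1 by (intro summable_mult)
  show "summable (\<lambda>k. \<Sum>n. X k n)"
    by (rule summable_comparison_test'[OF major', where N=0]) (use row in simp)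
  have "norm (\<Sum>k. \<Sum>n. X k n) \<le> (\<Sum>k. C / (1 - q2) * q1^k)"
    by (rule norm_suminf_le[OF _ major']) (use row in simp)
  also have "\<dots> = C / ((1 - q1) * (1 - q2))"
    using suminf_mult[OF g1(1), of "C / (1 - q2)"] g1(2) by simp
  finally show "\<bar>\<Sum>k. \<Sum>n. X k n\<bar> \<le> C / ((1 - q1) * (1 - q2))" by simp
qed

lemma double_suminf_mult:
  fixes X :: "nat \<Rightarrow> nat \<Rightarrow> real"
  assumes "\<And>k n. \<bar>X k n\<bar> \<le> C * q1^k * q2^n"
  shows "a * (\<Sum>k. \<Sum>n. X k n) = (\<Sum>k. \<Sum>n. a * X k n)"
  using double_suminf_summable[OF assms] by (simp add: suminf_mult)

lemma double_suminf_add: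
  fixes X Y :: "nat \<Rightarrow> nat \<Rightarrow> real"
  assumes "\<And>k n. \<bar>X k n\<bar> \<le> C * q1^k * q2^n" and "\<And>k n. \<bar>Y k n\<bar> \<le> C' * q1^k * q2^n"
  shows "(\<Sum>k. \<Sum>n. X k n + Y k n) = (\<Sum>k. \<Sum>n. X k n) + (\<Sum>k. \<Sum>n. Y k n)"
  using double_suminf_summable[OF assms(1)] double_suminf_summable[OF assms(2)]
  by (simp add: suminf_add)

lemma has_integral_double_suminf:
  fixes u :: "nat \<Rightarrow> nat \<Rightarrow> real \<Rightarrow> real"
  assumes cont: "\<And>k n. continuous_on {a..b} (u k n)"
    and bound: "\<And>k n x. x \<in> {a..b} \<Longrightarrow> \<bar>u k n x\<bar> \<le> C * q1^k * q2^n"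
  shows "((\<lambda>x. \<Sum>k. \<Sum>n. u k n x) has_integral (\<Sum>k. \<Sum>n. integral {a..b} (u k n))) {a..b}"
    and "continuous_on {a..b} (\<lambda>x. \<Sum>k. \<Sum>n. u k n x)"
proof -
  have geom2: "summable (\<lambda>n. C * q1^k * q2^n)" for k
    using q2 by (intro summable_mult summable_geometric) simp
  note row = weierstrass_series_integral[OF cont bound geom2]
  have row_bound: "\<bar>\<Sum>n. u k n x\<bar> \<le> C / (1 - q2) * q1^k" if "x \<in> {a..b}" for k x
    using double_suminf_summable(2)[of "\<lambda>k n. u k n x"] bound[OF that] by blast
  have geom1: "summable (\<lambda>k. C / (1 - q2) * q1^k)"
    using q1 by (intro summable_mult summable_geometric) simp
  note col = weierstrass_series_integral[of a b "\<lambda>k x. \<Sum>n. u k n x", OF row(2) row_bound geom1]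
  show "continuous_on {a..b} (\<lambda>x. \<Sum>k. \<Sum>n. u k n x)" by (rule col(2))
  have "integral {a..b} (\<lambda>x. \<Sum>n. u k n x) = (\<Sum>n. integral {a..b} (u k n))" for k
    using row(1) by (rule integral_unique)
  then show "((\<lambda>x. \<Sum>k. \<Sum>n. u k n x) has_integral (\<Sum>k. \<Sum>n. integral {a..b} (u k n))) {a..b}"
    using col(1) by simp
qed

lemma double_suminf_binomial_split:
  fixes U :: "nat \<Rightarrow> nat \<Rightarrow> real"
  defines "B k n \<equiv> real ((k + n) choose n)"
  assumes bound: "\<And>k n. \<bar>B k n * U k n\<bar> \<le> C * q1^k * q2^n"
  shows "(\<Sum>k. \<Sum>n. B k n * U k n)
           = U 0 0 + (\<Sum>k. \<Sum>n. B k n * U (Suc k) n) + (\<Sum>k. \<Sum>n. B k n * U k (Suc n))"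
proof -
  define P where "P k n = (if k = 0 then 0 else B (k - 1) n * U k n)" for k n
  define Q where "Q k n = (if n = 0 then 0 else B k (n - 1) * U k n)" for k n
  define D :: "nat \<Rightarrow> nat \<Rightarrow> real" where "D k n = (if k = 0 \<and> n = 0 then U 0 0 else 0)" for k n
  have pascal: "B (Suc k) (Suc n) = B k (Suc n) + B (Suc k) n" for k n
  proof -
    have "(Suc k + Suc n) choose Suc n = (k + Suc n choose Suc n) + (Suc k + n choose n)"
      by (simp add: add.commute)
    then show ?thesis unfolding B_def by simp
  qed
  have split: "B k n * U k n = P k n + Q k n + D k n" for k n
    using pascal[of "k - 1" "n - 1"] unfolding P_def Q_def D_def
    by (cases k; cases n) (auto simp: B_def algebra_simps)
  have B_mono: "B (k - 1) n \<le> B k n" "B k (n - 1) \<le> B k n" for k n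
    using pascal[of "k - 1" "n - 1"] by (cases k; cases n; simp add: B_def)+
  have "\<bar>P k n\<bar> \<le> \<bar>B k n * U k n\<bar>" "\<bar>Q k n\<bar> \<le> \<bar>B k n * U k n\<bar>" for k n
    using B_mono[of k n] unfolding P_def Q_def by (auto simp: abs_mult B_def intro!: mult_right_mono)
  then have P_bound: "\<bar>P k n\<bar> \<le> C * q1^k * q2^n" and Q_bound: "\<bar>Q k n\<bar> \<le> C * q1^k * q2^n" for k n
    using bound[of k n] by (blast intro: order_trans)+
  have D_bound: "\<bar>D k n\<bar> \<le> \<bar>U 0 0\<bar> * q1^k * q2^n" for k n
    using q1 q2 by (simp add: D_def)
  have PQ_bound: "\<bar>P k n + Q k n\<bar> \<le> (C + C) * q1^k * q2^n" for k n
    using P_bound[of k n] Q_bound[of k n] by (simp add: algebra_simps)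
  have "(\<Sum>k. \<Sum>n. B k n * U k n) = (\<Sum>k. \<Sum>n. (P k n + Q k n) + D k n)"
    by (simp add: split)
  also have "\<dots> = (\<Sum>k. \<Sum>n. P k n) + (\<Sum>k. \<Sum>n. Q k n) + (\<Sum>k. \<Sum>n. D k n)"
    by (simp add: double_suminf_add[OF PQ_bound D_bound] double_suminf_add[OF P_bound Q_bound])
  also have "(\<Sum>k. \<Sum>n. D k n) = U 0 0"
    by (subst suminf_finite[of "{0}"]; simp add: D_def suminf_finite[of "{0}"])+
  also have "(\<Sum>k. \<Sum>n. P k n) = (\<Sum>k. \<Sum>n. B k n * U (Suc k) n)"
    using suminf_split_head[OF double_suminf_summable(3)[OF P_bound]] by (simp add: P_def)
  also have "(\<Sum>k. \<Sum>n. Q k n) = (\<Sum>k. \<Sum>n. B k n * U k (Suc n))"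
    using suminf_split_head[OF double_suminf_summable(1)[OF Q_bound]] by (simp add: Q_def)
  finally show ?thesis by simp
qed

end

section \<open>The double Mittag-Leffler series\<close>

text \<open>The series of the theorem with its Prabhakar functions expanded, for \<open>c = \<rho> + \<beta>\<close>,
  \<open>d = \<alpha>\<rho>\<close> and \<open>e = \<mu> + 1\<close>.\<close>
definition ml_series :: "real \<Rightarrow> real \<Rightarrow> real \<Rightarrow> real \<Rightarrow> real" where
  "ml_series c d e t =
     (\<Sum>k. \<Sum>n. c^k * d^n * real ((k + n) choose n) * power_kernel (real k + e * real n) t)"

definition ml_rate :: "real \<Rightarrow> real \<Rightarrow> real" where
  "ml_rate c d = max 1 (max (4 * \<bar>c\<bar>) (4 * \<bar>d\<bar>))"

lemma ml_rate_ratio: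
  shows "0 \<le> 2 * \<bar>c\<bar> / ml_rate c d" "2 * \<bar>c\<bar> / ml_rate c d < 1"
    and "0 \<le> 2 * \<bar>d\<bar> / ml_rate c d" "2 * \<bar>d\<bar> / ml_rate c d < 1"
  by (auto simp: ml_rate_def field_simps)

lemma ml_term_bound:
  assumes e: "e \<ge> 1" and s: "s \<ge> 0" and t: "0 \<le> t" "t \<le> R"
  shows "\<bar>c^k * d^n * real ((k + n) choose n) * power_kernel (s + (real k + e * real n)) t\<bar>
          \<le> exp 2 * exp (ml_rate c d * R) * (2 * \<bar>c\<bar> / ml_rate c d)^k * (2 * \<bar>d\<bar> / ml_rate c d)^n"
proof -
  define l where "l = ml_rate c d"
  define p where "p = s + (real k + e * real n)"
  have l: "l \<ge> 1" unfolding l_def ml_rate_def by simp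
  have p: "p \<ge> 0" using e s unfolding p_def by simp
  have binomial: "real ((k + n) choose n) \<le> 2^k * 2^n"
    using of_nat_mono[OF binomial_le_pow2[of "k + n" n]] by (simp add: power_add)
  have "l^k * l^n = l powr (real k + real n)"
    using l by (simp add: powr_add powr_realpow)
  also have "\<dots> \<le> l powr p"
    using l s mult_right_mono[OF e, of "real n"] unfolding p_def by (intro powr_mono) auto
  finally have lp: "l^k * l^n \<le> l powr p" .
  have "power_kernel p t \<le> exp 2 * exp (l * t) / l powr p"
    using power_kernel_le_exp[OF t(1) p, of l] l by simp
  also have "\<dots> \<le> exp 2 * exp (l * R) / (l^k * l^n)"
    using l t lp by (intro frac_le) auto
  finally have kernel_bound: "power_kernel p t \<le> exp 2 * exp (l * R) / (l^k * l^n)" .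
  have "\<bar>c^k * d^n * real ((k + n) choose n) * power_kernel p t\<bar>
      = \<bar>c\<bar>^k * \<bar>d\<bar>^n * real ((k + n) choose n) * power_kernel p t"
    using power_kernel_nonneg[OF p] by (simp add: abs_mult power_abs)
  also have "\<dots> \<le> \<bar>c\<bar>^k * \<bar>d\<bar>^n * (2^k * 2^n) * (exp 2 * exp (l * R) / (l^k * l^n))"
    using binomial kernel_bound power_kernel_nonneg[OF p] by (intro mult_mono) auto
  also have "\<dots> = exp 2 * exp (l * R) * (2 * \<bar>c\<bar> / l)^k * (2 * \<bar>d\<bar> / l)^n"
    using l by (simp add: field_simps power_mult_distrib power_divide)
  finally show ?thesis unfolding l_def p_def .
qed

lemma ml_series_row_summable:
  assumes e: "e \<ge> 1" and t: "t \<ge> 0"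
  shows "summable (\<lambda>n. c^k * d^n * real ((k + n) choose n) * power_kernel (real k + e * real n) t)"
proof -
  define q1 where "q1 = 2 * \<bar>c\<bar> / ml_rate c d"
  define q2 where "q2 = 2 * \<bar>d\<bar> / ml_rate c d"
  have "\<bar>c^k * d^n * real ((k + n) choose n) * power_kernel (real k + e * real n) t\<bar>
      \<le> exp 2 * exp (ml_rate c d * t) * q1^k * q2^n" for k n
    using ml_term_bound[OF e order.refl t order.refl, where c=c and d=d and k=k and n=n]
    unfolding q1_def q2_def by simp
  then show ?thesis
    by (rule double_suminf_summable(1)[OF ml_rate_ratio[where c=c and d=d, folded q1_def q2_def]])
qed

lemma ml_series_abs_le:
  assumes "e \<ge> 1" and "t \<ge> 0"
  shows "\<bar>ml_series c d e t\<bar> \<le> 4 * exp 2 * exp (ml_rate c d * t)"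
proof -
  define q1 where "q1 = 2 * \<bar>c\<bar> / ml_rate c d"
  define q2 where "q2 = 2 * \<bar>d\<bar> / ml_rate c d"
  have q: "0 \<le> q1" "q1 \<le> 1/2" "0 \<le> q2" "q2 \<le> 1/2"
    unfolding q1_def q2_def ml_rate_def by (auto simp: field_simps)
  define C where "C = exp 2 * exp (ml_rate c d * t)"
  have "\<bar>c^k * d^n * real ((k + n) choose n) * power_kernel (real k + e * real n) t\<bar> \<le> C * q1^k * q2^n" for k n
    using ml_term_bound[OF assms(1) order.refl assms(2) order.refl, where c=c and d=d and k=k and n=n]
    unfolding q1_def q2_def C_def by simp
  then have "\<bar>ml_series c d e t\<bar> \<le> C / ((1 - q1) * (1 - q2))"
    unfolding ml_series_def by (rule double_suminf_summable(4)[rotated 4]) (use q in auto)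
  also have "\<dots> \<le> C / (1/2 * (1/2))"
    using q by (intro divide_left_mono mult_mono) (auto simp: C_def)
  finally show ?thesis by (simp add: C_def)
qed

lemma pochhammer_of_nat_plus_1: "pochhammer (real k + 1) n / fact n = real ((k + n) choose n)"
proof -
  have "real ((k + n) choose n) = real (k + n) gchoose n" by (rule binomial_gbinomial)
  also have "\<dots> = pochhammer (real (k + n) - real n + 1) n / fact n" by (rule gbinomial_pochhammer')
  finally show ?thesis by simp
qed

lemma power_powr_eq_power_kernel:
  assumes t: "t \<ge> 0" and e: "e > 0"
  shows "t^k * (t powr e)^n / Gamma (real k + e * real n + 1) = power_kernel (real k + e * real n) t"
proof (cases "k = 0 \<and> n = 0")
  case False
  then have p: "real k + e * real n > 0" using e by (auto intro: add_pos_nonneg add_nonneg_pos)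
  show ?thesis
  proof (cases "t = 0")
    case True
    then show ?thesis using False p by (auto simp: power_kernel_pos_order)
  next
    case False
    then have "t^k * (t powr e)^n = t powr (real k + e * real n)"
      using t by (simp add: powr_realpow powr_add powr_powr[symmetric] mult.commute)
    then show ?thesis using p by (simp add: power_kernel_pos_order)
  qed
qed simp

lemma prabhakar_ML_row_eq:
  assumes t: "t \<ge> 0" and \<mu>: "\<mu> > 0"
  shows "c^k * t^k * prabhakar_ML (real k + 1) (\<mu> + 1) (real k + 1) (d * t powr (\<mu> + 1))
           = (\<Sum>n. c^k * d^n * real ((k + n) choose n) * power_kernel (real k + (\<mu> + 1) * real n) t)"
proof -
  define e where "e = \<mu> + 1"
  have e: "e > 0" "e \<ge> 1" using \<mu> by (auto simp: e_def)
  define z where "z n = pochhammer (real k + 1) n / (fact n * Gamma (e * real n + (real k + 1))) * (d * t powr e)^n" for n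
  have term_eq: "b^k * t^k * z n = b^k * d^n * real ((k + n) choose n) * power_kernel (real k + e * real n) t" for b n
  proof -
    have "Gamma (real k + e * real n + 1) > 0"
      using e by (intro Gamma_real_pos add_nonneg_pos) auto
    then show ?thesis
      using pochhammer_of_nat_plus_1[of k n]
      unfolding z_def power_powr_eq_power_kernel[OF t e(1), of k n, symmetric]
      by (simp add: power_mult_distrib field_simps add_ac)
  qed
  have "summable z"
  proof (cases "t = 0")
    case True
    then have "z n = 0" if "n \<notin> {0}" for n using that e by (simp add: z_def)
    then show ?thesis by (intro summable_finite[of "{0}"]) auto
  next
    case False
    have "summable (\<lambda>n. 1^k * d^n * real ((k + n) choose n) * power_kernel (real k + e * real n) t)"
      by (rule ml_series_row_summable[OF e(2) t])
    then have "summable (\<lambda>n. t^k * z n / t^k)"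
      using term_eq[of 1] by (simp add: summable_divide)
    then show ?thesis using False by simp
  qed
  then have "c^k * t^k * (\<Sum>n. z n) = (\<Sum>n. c^k * t^k * z n)"
    by (simp add: suminf_mult)
  then show ?thesis
    unfolding prabhakar_ML_def using term_eq by (simp add: z_def e_def)
qed

lemma prabhakar_series_eq_ml_series:
  assumes "t \<ge> 0" and "\<mu> > 0"
  shows "(\<Sum>k. c^k * t^k * prabhakar_ML (real k + 1) (\<mu> + 1) (real k + 1) (d * t powr (\<mu> + 1)))
           = ml_series c d (\<mu> + 1) t"
  unfolding ml_series_def using prabhakar_ML_row_eq[OF assms] by simp

lemma ml_series_convolution:
  assumes e: "e \<ge> 1" and a: "a \<ge> 0" and t: "t \<ge> 0"
  shows "((\<lambda>s. power_kernel a (t - s) * ml_series c d e s) has_integral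
           (\<Sum>k. \<Sum>n. c^k * d^n * real ((k + n) choose n) * power_kernel (a + (real k + e * real n) + 1) t)) {0..t}"
    and "continuous_on {0..t} (\<lambda>s. power_kernel a (t - s) * ml_series c d e s)"
proof -
  define q1 where "q1 = 2 * \<bar>c\<bar> / ml_rate c d"
  define q2 where "q2 = 2 * \<bar>d\<bar> / ml_rate c d"
  note q = ml_rate_ratio[where c=c and d=d, folded q1_def q2_def]
  define B where "B k n = c^k * d^n * real ((k + n) choose n)" for k n
  define u where "u k n s = power_kernel a (t - s) * (B k n * power_kernel (real k + e * real n) s)" for k n s
  define C where "C = exp 2 * exp t * (exp 2 * exp (ml_rate c d * t))"
  have term_bound: "\<bar>B k n * power_kernel (real k + e * real n) s\<bar> \<le> exp 2 * exp (ml_rate c d * t) * q1^k * q2^n"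
    if "s \<in> {0..t}" for k n s
    using ml_term_bound[OF e order.refl, of s t, where c=c and d=d and k=k and n=n] that
    unfolding B_def q1_def q2_def by simp
  have cont: "continuous_on {0..t} (u k n)" for k n
    unfolding u_def using a e
    by (intro continuous_intros continuous_on_power_kernel_compose
        continuous_on_subset[OF continuous_on_power_kernel]) auto
  have bound: "\<bar>u k n s\<bar> \<le> C * q1^k * q2^n" if s: "s \<in> {0..t}" for k n s
  proof -
    have "power_kernel a (t - s) \<le> exp 2 * exp (t - s)"
      using power_kernel_le_exp[of "t - s" a 1] s a by auto
    also have "\<dots> \<le> exp 2 * exp t"
      using s by simp
    finally have kernel_bound: "power_kernel a (t - s) \<le> exp 2 * exp t" .
    have "\<bar>u k n s\<bar> = power_kernel a (t - s) * \<bar>B k n * power_kernel (real k + e * real n) s\<bar>"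
      unfolding u_def using power_kernel_nonneg[OF a] by (simp add: abs_mult)
    also have "\<dots> \<le> exp 2 * exp t * (exp 2 * exp (ml_rate c d * t) * q1^k * q2^n)"
      using kernel_bound term_bound[OF s] power_kernel_nonneg[OF a] by (intro mult_mono) auto
    finally show ?thesis by (simp add: C_def mult_ac)
  qed
  note series = has_integral_double_suminf[OF q cont bound]
  have "integral {0..t} (u k n) = B k n * power_kernel (a + (real k + e * real n) + 1) t" for k n
  proof -
    have "((\<lambda>s. B k n * (power_kernel a (t - s) * power_kernel (real k + e * real n) s)) has_integral
            B k n * power_kernel (a + (real k + e * real n) + 1) t) {0..t}"
      using e a t by (intro has_integral_mult_right has_integral_power_kernel_convolution) auto
    then have "(u k n has_integral B k n * power_kernel (a + (real k + e * real n) + 1) t) {0..t}"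
      unfolding u_def by (simp add: mult_ac)
    then show ?thesis by (rule integral_unique)
  qed
  moreover have "(\<Sum>k. \<Sum>n. u k n s) = power_kernel a (t - s) * ml_series c d e s" if "s \<in> {0..t}" for s
    unfolding u_def ml_series_def B_def
    using double_suminf_mult[OF q term_bound[OF that, unfolded B_def]] by simp
  ultimately show "((\<lambda>s. power_kernel a (t - s) * ml_series c d e s) has_integral
      (\<Sum>k. \<Sum>n. c^k * d^n * real ((k + n) choose n) * power_kernel (a + (real k + e * real n) + 1) t)) {0..t}"
    and "continuous_on {0..t} (\<lambda>s. power_kernel a (t - s) * ml_series c d e s)"
    using series unfolding B_def
    by (auto intro: has_integral_eq[rotated] continuous_on_eq)
qed

lemma continuous_on_ml_series:
  assumes "e \<ge> 1" shows "continuous_on {0..} (ml_series c d e)"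
  unfolding continuous_on_eq_continuous_within
proof
  fix t :: real assume t: "t \<in> {0..}"
  have "continuous_on {0..t+1} (ml_series c d e)"
    using ml_series_convolution(2)[OF assms order.refl, of "t+1" c d] t by simp
  then have "continuous (at t within {0..t+1}) (ml_series c d e)"
    using t by (simp add: continuous_on_eq_continuous_within)
  moreover have "at t within {0..t+1} = at t within {0..}"
    by (rule at_within_nhd[where S="{..<t+1}"]) auto
  ultimately show "continuous (at t within {0..}) (ml_series c d e)" by simp
qed

lemma continuous_on_exp_ml_series:
  "e \<ge> 1 \<Longrightarrow> continuous_on {0..} (\<lambda>u. exp (- \<beta> * u) * ml_series c d e u)"
  by (rule continuous_on_mult[OF continuous_on_exp[OF continuous_on_mult_left[OF continuous_on_id]]
        continuous_on_ml_series])

lemma ml_series_integral_equation: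
  assumes \<mu>: "\<mu> > 0" and t: "t \<ge> 0"
  shows "ml_series c d (\<mu> + 1) t = 1 + c * integral {0..t} (ml_series c d (\<mu> + 1))
           + d * integral {0..t} (\<lambda>s. power_kernel \<mu> (t - s) * ml_series c d (\<mu> + 1) s)"
proof -
  define e where "e = \<mu> + 1"
  have e: "e \<ge> 1" using \<mu> by (simp add: e_def)
  define q1 where "q1 = 2 * \<bar>c\<bar> / ml_rate c d"
  define q2 where "q2 = 2 * \<bar>d\<bar> / ml_rate c d"
  note q = ml_rate_ratio[where c=c and d=d, folded q1_def q2_def]
  define C where "C = exp 2 * exp (ml_rate c d * t)"
  define B where "B k n = real ((k + n) choose n)" for k n
  define U where "U k n = c^k * d^n * power_kernel (real k + e * real n) t" for k n
  define X where "X s k n = c^k * d^n * B k n * power_kernel (s + (real k + e * real n)) t" for s k n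
  have X_bound: "\<bar>X s k n\<bar> \<le> C * q1^k * q2^n" if "s \<ge> 0" for s k n
    using ml_term_bound[OF e that t order.refl, where c=c and d=d and k=k and n=n]
    unfolding X_def B_def C_def q1_def q2_def .
  have "integral {0..t} (ml_series c d e) = (\<Sum>k. \<Sum>n. X 1 k n)"
    using integral_unique[OF ml_series_convolution(1)[OF e order.refl t, of c d]]
    by (simp add: X_def B_def add_ac)
  moreover have "integral {0..t} (\<lambda>s. power_kernel \<mu> (t - s) * ml_series c d e s) = (\<Sum>k. \<Sum>n. X (\<mu> + 1) k n)"
    using integral_unique[OF ml_series_convolution(1)[OF e _ t, of \<mu> c d]] \<mu>
    by (simp add: X_def B_def add_ac)
  moreover have "ml_series c d e t = (\<Sum>k. \<Sum>n. B k n * U k n)"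
    unfolding ml_series_def B_def U_def by (simp add: mult_ac)
  moreover have "\<bar>B k n * U k n\<bar> \<le> C * q1^k * q2^n" for k n
    using X_bound[of 0 k n] by (simp add: X_def U_def mult_ac)
  then have "(\<Sum>k. \<Sum>n. B k n * U k n)
      = U 0 0 + (\<Sum>k. \<Sum>n. B k n * U (Suc k) n) + (\<Sum>k. \<Sum>n. B k n * U k (Suc n))"
    unfolding B_def by (rule double_suminf_binomial_split[OF q])
  moreover have "(\<Sum>k. \<Sum>n. B k n * U (Suc k) n) = c * (\<Sum>k. \<Sum>n. X 1 k n)"
    using double_suminf_mult[OF q X_bound[of 1], of c] by (simp add: X_def U_def algebra_simps)
  moreover have "(\<Sum>k. \<Sum>n. B k n * U k (Suc n)) = d * (\<Sum>k. \<Sum>n. X (\<mu> + 1) k n)"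
    using double_suminf_mult[OF q X_bound[of "\<mu> + 1"], of d] \<mu>
    by (simp add: X_def U_def e_def algebra_simps)
  ultimately show ?thesis by (simp add: U_def e_def)
qed

lemma ml_series_at_0: "\<mu> > 0 \<Longrightarrow> ml_series c d (\<mu> + 1) 0 = 1"
  using ml_series_integral_equation[of \<mu> 0 c d] by simp

section \<open>The primitive of the kernel\<close>

lemma continuous_on_exp_power_kernel:
  "p \<ge> 0 \<Longrightarrow> continuous_on {0..} (\<lambda>u. exp (- \<beta> * u) * power_kernel p u)"
  by (rule continuous_on_mult[OF continuous_on_exp[OF continuous_on_mult_left[OF continuous_on_id]]
        continuous_on_power_kernel])

lemma exp_power_kernel_has_derivative:
  assumes \<mu>: "\<mu> > 0" and x: "x > 0"
  shows "((\<lambda>u. exp (- \<beta> * u) * power_kernel \<mu> u) has_real_derivative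
           kernel 1 \<beta> \<mu> x - \<beta> * (exp (- \<beta> * x) * power_kernel \<mu> x)) (at x)"
proof -
  have "((\<lambda>u. u powr \<mu> / Gamma (\<mu> + 1)) has_real_derivative \<mu> * x powr (\<mu> - 1) / Gamma (\<mu> + 1)) (at x)"
    using has_real_derivative_powr[OF x, of \<mu>] by (rule DERIV_cdivide)
  moreover have "power_kernel \<mu> = (\<lambda>u. u powr \<mu> / Gamma (\<mu> + 1))"
    using \<mu> by (auto simp: power_kernel_pos_order)
  moreover have "Gamma (\<mu> + 1) = \<mu> * Gamma \<mu>"
    using \<mu> by (intro Gamma_plus1) (auto elim!: nonpos_Ints_cases)
  ultimately have "(power_kernel \<mu> has_real_derivative x powr (\<mu> - 1) / Gamma \<mu>) (at x)"
    using \<mu> by simp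
  moreover have "((\<lambda>u. exp (- \<beta> * u)) has_real_derivative - \<beta> * exp (- \<beta> * x)) (at x)"
    by (auto intro!: derivative_eq_intros)
  ultimately have "((\<lambda>u. exp (- \<beta> * u) * power_kernel \<mu> u) has_real_derivative
      - \<beta> * exp (- \<beta> * x) * power_kernel \<mu> x + x powr (\<mu> - 1) / Gamma \<mu> * exp (- \<beta> * x)) (at x)"
    by (rule DERIV_mult[rotated])
  moreover have "- \<beta> * exp (- \<beta> * x) * power_kernel \<mu> x + x powr (\<mu> - 1) / Gamma \<mu> * exp (- \<beta> * x)
      = kernel 1 \<beta> \<mu> x - \<beta> * (exp (- \<beta> * x) * power_kernel \<mu> x)"
    by (simp add: kernel_def)
  ultimately show ?thesis by (simp add: mult.assoc)
qed

lemma kernel_int_eq: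
  assumes \<mu>: "\<mu> > 0" and r: "r \<ge> 0"
  shows "kernel_int \<alpha> \<beta> \<mu> r =
           \<alpha> * (exp (- \<beta> * r) * power_kernel \<mu> r
                + \<beta> * integral {0..r} (\<lambda>u. exp (- \<beta> * u) * power_kernel \<mu> u))"
proof -
  define a where "a u = exp (- \<beta> * u) * power_kernel \<mu> u" for u
  define F where "F u = a u + \<beta> * integral {0..u} a" for u
  have a_cont: "continuous_on {0..r} a"
    unfolding a_def using \<mu>
    by (intro continuous_intros continuous_on_subset[OF continuous_on_power_kernel]) auto
  then have "continuous_on {0..r} F"
    unfolding F_def by (intro continuous_intros indefinite_integral_continuous_1 integrable_continuous_interval)
  moreover have "(F has_vector_derivative kernel 1 \<beta> \<mu> x) (at x)" if x: "x \<in> {0<..<r}" for x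
  proof -
    have "((\<lambda>u. integral {0..u} a) has_vector_derivative a x) (at x within {0..r})"
      using x by (intro integral_has_vector_derivative a_cont) auto
    moreover have "at x within {0..r} = at x"
      by (rule at_within_interior) (use x in \<open>simp add: interior_atLeastAtMost_real\<close>)
    ultimately have "((\<lambda>u. integral {0..u} a) has_real_derivative a x) (at x)"
      by (simp add: has_real_derivative_iff_has_vector_derivative)
    from DERIV_add[OF exp_power_kernel_has_derivative[OF \<mu>, of x \<beta>] DERIV_cmult[OF this, of \<beta>]] x
    have "(F has_real_derivative kernel 1 \<beta> \<mu> x - \<beta> * a x + \<beta> * a x) (at x)"
      unfolding F_def a_def by simp
    then show ?thesis by (simp add: has_real_derivative_iff_has_vector_derivative)
  qed
  ultimately have "(kernel 1 \<beta> \<mu> has_integral F r - F 0) {0..r}"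
    by (rule fundamental_theorem_of_calculus_interior[OF r])
  moreover have "F 0 = 0" unfolding F_def a_def using \<mu> by (simp add: power_kernel_at_0)
  ultimately have "((\<lambda>x. \<alpha> * kernel 1 \<beta> \<mu> x) has_integral \<alpha> * F r) {0..r}"
    by (intro has_integral_mult_right) simp
  moreover have "kernel \<alpha> \<beta> \<mu> = (\<lambda>x. \<alpha> * kernel 1 \<beta> \<mu> x)"
    by (auto simp: kernel_def[abs_def])
  ultimately have "(kernel \<alpha> \<beta> \<mu> has_integral \<alpha> * F r) {0..r}"
    by simp
  then show ?thesis
    unfolding kernel_int_def F_def a_def by (rule integral_unique)
qed

lemma continuous_on_kernel_int:
  assumes \<mu>: "\<mu> > 0" shows "continuous_on {0..t} (kernel_int \<alpha> \<beta> \<mu>)"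
proof -
  define a where "a u = exp (- \<beta> * u) * power_kernel \<mu> u" for u
  have a_cont: "continuous_on {0..t} a"
    unfolding a_def using \<mu>
    by (intro continuous_intros continuous_on_subset[OF continuous_on_power_kernel]) auto
  then have "continuous_on {0..t} (\<lambda>r. \<alpha> * (a r + \<beta> * integral {0..r} a))"
    by (intro continuous_intros indefinite_integral_continuous_1 integrable_continuous_interval)
  then show ?thesis
    by (rule continuous_on_eq) (use kernel_int_eq[OF \<mu>] in \<open>simp add: a_def[abs_def]\<close>)
qed

section \<open>Integrals of convolutions\<close>

lemma has_integral_convolution_derivative:
  fixes k K h :: "real \<Rightarrow> real"
  assumes t: "t \<ge> 0" and k: "continuous_on UNIV k"
    and K: "\<And>r. r > - (t + 1) \<Longrightarrow> (K has_real_derivative k r) (at r)"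
    and h: "continuous_on {0..t} h"
  shows "((\<lambda>x. integral {0..t} (\<lambda>s. k (x - s) * h s)) has_integral
           integral {0..t} (\<lambda>s. K (t - s) * h s) - integral {0..t} (\<lambda>s. K (- s) * h s)) {0..t}"
proof -
  define U where "U = {-1<..<t+1}"
  define H where "H x = integral (cbox 0 t) (\<lambda>s. K (x - s) * h s)" for x
  have K_cont: "continuous_on {- (t + 1)<..} K"
  proof (intro continuous_at_imp_continuous_on ballI)
    fix r assume "r \<in> {- (t + 1)<..}"
    then show "isCont K r" using K[of r] DERIV_isCont by auto
  qed
  have deriv: "(H has_real_derivative integral (cbox 0 t) (\<lambda>s. k (x - s) * h s)) (at x within U)"
    if x: "x \<in> U" for x
    unfolding H_def
  proof (rule leibniz_rule_field_derivative[OF _ _ _ x convex_real_interval(8)[of "-1" "t+1", folded U_def]])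
    fix y s assume y: "y \<in> U" and s: "s \<in> cbox 0 t"
    have "((\<lambda>y. K (y - s)) has_real_derivative k (y - s) * 1) (at y within U)"
      by (rule DERIV_chain2[OF K]) (use y s in \<open>auto simp: U_def intro!: derivative_eq_intros\<close>)
    then show "((\<lambda>y. K (y - s) * h s) has_real_derivative k (y - s) * h s) (at y within U)"
      by (auto intro!: derivative_eq_intros)
  next
    fix y assume "y \<in> U"
    then have "continuous_on {0..t} (\<lambda>s. K (y - s) * h s)"
      by (intro continuous_intros h continuous_on_compose2[OF K_cont]) (auto simp: U_def)
    then show "(\<lambda>s. K (y - s) * h s) integrable_on cbox 0 t"
      by (simp add: integrable_continuous_interval)
  next
    have "continuous_on (U \<times> {0..t}) (\<lambda>z. k (fst z - snd z) * h (snd z))"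
      by (intro continuous_intros continuous_on_compose2[OF k] continuous_on_compose2[OF h]) auto
    then show "continuous_on (U \<times> cbox 0 t) (\<lambda>(y, s). k (y - s) * h s)"
      by (simp add: split_beta)
  qed
  have "(H has_vector_derivative integral {0..t} (\<lambda>s. k (x - s) * h s)) (at x within {0..t})"
    if "x \<in> {0..t}" for x
    using DERIV_subset[OF deriv[of x], of "{0..t}"] that
    by (auto simp: U_def has_real_derivative_iff_has_vector_derivative subset_iff)
  then have "((\<lambda>x. integral {0..t} (\<lambda>s. k (x - s) * h s)) has_integral H t - H 0) {0..t}"
    using t by (intro fundamental_theorem_of_calculus)
  then show ?thesis by (simp add: H_def)
qed

lemma has_integral_convolution_primitive:
  fixes a h :: "real \<Rightarrow> real"
  assumes a: "continuous_on {0..} a" and a0: "a 0 = 0"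
    and h: "continuous_on {0..t} h" and t: "t \<ge> 0"
  shows "((\<lambda>x. integral {0..x} (\<lambda>s. a (x - s) * h s)) has_integral
            integral {0..t} (\<lambda>s. integral {0..t - s} a * h s)) {0..t}"
proof -
  define L where "L = t + 2"
  define ax where "ax r = a (max r 0)" for r
  define Ax where "Ax r = integral {-L..r} ax" for r
  have ax_cont: "continuous_on UNIV ax"
    unfolding ax_def by (rule continuous_on_compose2[OF a]) (auto intro!: continuous_intros)
  have ax_neg: "ax r = 0" if "r \<le> 0" for r using that a0 by (simp add: ax_def max_def)
  have ax_pos: "ax r = a r" if "r \<ge> 0" for r using that by (simp add: ax_def)
  have Ax_neg: "Ax r = 0" if "r \<le> 0" for r
  proof -
    have "Ax r = integral {-L..r} (\<lambda>_. 0::real)"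
      unfolding Ax_def by (rule integral_cong) (use that ax_neg in auto)
    then show ?thesis by simp
  qed
  have Ax_pos: "Ax r = integral {0..r} a" if "r \<ge> 0" for r
  proof -
    have "integral {-L..0} ax + integral {0..r} ax = integral {-L..r} ax"
      using that t ax_cont unfolding L_def
      by (intro Henstock_Kurzweil_Integration.integral_combine integrable_continuous_interval)
        (auto intro: continuous_on_subset)
    moreover have "integral {0..r} ax = integral {0..r} a" by (rule integral_cong) (simp add: ax_pos)
    ultimately show ?thesis using Ax_neg[of 0] by (simp add: Ax_def)
  qed
  have "(Ax has_real_derivative ax r) (at r)" if "r > - (t + 1)" for r
  proof -
    have "(Ax has_vector_derivative ax r) (at r within {-L..r+1})"
      unfolding Ax_def using that L_def
      by (intro integral_has_vector_derivative continuous_on_subset[OF ax_cont]) auto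
    moreover have "at r within {-L..r+1} = at r"
      by (rule at_within_interior) (use that in \<open>simp add: L_def interior_atLeastAtMost_real\<close>)
    ultimately show ?thesis by (simp add: has_real_derivative_iff_has_vector_derivative)
  qed
  note leibniz = has_integral_convolution_derivative[OF t ax_cont this h]
  have "integral {0..t} (\<lambda>s. Ax (t - s) * h s) = integral {0..t} (\<lambda>s. integral {0..t - s} a * h s)"
    by (rule integral_cong) (simp add: Ax_pos)
  moreover have "integral {0..t} (\<lambda>s. Ax (- s) * h s) = 0"
    using integral_cong[of "{0..t}" "\<lambda>s. Ax (- s) * h s" "\<lambda>_. 0"] Ax_neg by simp
  ultimately have "((\<lambda>x. integral {0..t} (\<lambda>s. ax (x - s) * h s)) has_integral
          integral {0..t} (\<lambda>s. integral {0..t - s} a * h s)) {0..t}"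
    using leibniz by simp
  moreover have "integral {0..t} (\<lambda>s. ax (x - s) * h s) = integral {0..x} (\<lambda>s. a (x - s) * h s)"
    if x: "x \<in> {0..t}" for x
  proof -
    have "integral {0..x} (\<lambda>s. ax (x - s) * h s) + integral {x..t} (\<lambda>s. ax (x - s) * h s)
          = integral {0..t} (\<lambda>s. ax (x - s) * h s)"
      using x by (intro Henstock_Kurzweil_Integration.integral_combine integrable_continuous_interval
          continuous_intros h continuous_on_compose2[OF ax_cont]) auto
    moreover have "integral {x..t} (\<lambda>s. ax (x - s) * h s) = 0"
      using integral_cong[of "{x..t}" "\<lambda>s. ax (x - s) * h s" "\<lambda>_. 0"] ax_neg by simp
    moreover have "integral {0..x} (\<lambda>s. ax (x - s) * h s) = integral {0..x} (\<lambda>s. a (x - s) * h s)"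
      by (rule integral_cong) (auto simp: ax_pos)
    ultimately show ?thesis by simp
  qed
  ultimately show ?thesis by (rule has_integral_eq[rotated])
qed

lemma has_integral_exp_weighted_primitive:
  fixes g :: "real \<Rightarrow> real" and \<beta> t :: real
  assumes g: "continuous_on {0..t} g" and t: "t \<ge> 0"
  shows "((\<lambda>u. exp (- \<beta> * u) * g u - \<beta> * (exp (- \<beta> * u) * integral {0..u} g)) has_integral
           exp (- \<beta> * t) * integral {0..t} g) {0..t}"
proof -
  have "((\<lambda>u. exp (- \<beta> * u) * integral {0..u} g) has_vector_derivative
          exp (- \<beta> * x) * g x - \<beta> * (exp (- \<beta> * x) * integral {0..x} g)) (at x within {0..t})"
    if x: "x \<in> {0..t}" for x
  proof -
    have "((\<lambda>u. integral {0..u} g) has_real_derivative g x) (at x within {0..t})"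
      by (rule integral_has_real_derivative[OF g x])
    then have "((\<lambda>u. exp (- \<beta> * u) * integral {0..u} g) has_real_derivative
        (- \<beta> * exp (- \<beta> * x)) * integral {0..x} g + g x * exp (- \<beta> * x)) (at x within {0..t})"
      by (intro DERIV_mult derivative_eq_intros) auto
    then show ?thesis by (simp add: has_real_derivative_iff_has_vector_derivative algebra_simps)
  qed
  from fundamental_theorem_of_calculus[OF t this] show ?thesis by simp
qed

lemma has_integral_exp_neg:
  fixes \<beta> t :: real
  assumes t: "t \<ge> 0"
  shows "((\<lambda>u. - \<beta> * exp (- \<beta> * u)) has_integral exp (- \<beta> * t) - 1) {0..t}"
proof -
  have "((\<lambda>u. exp (- \<beta> * u)) has_vector_derivative - \<beta> * exp (- \<beta> * x)) (at x within {0..t})" for x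
    by (auto intro!: derivative_eq_intros simp: has_real_derivative_iff_has_vector_derivative[symmetric])
  from fundamental_theorem_of_calculus[OF t this] show ?thesis by simp
qed

section \<open>The scalar resolvent equation\<close>

lemma exp_ml_series_equation:
  fixes c d \<beta> :: real
  assumes \<mu>: "\<mu> > 0" and u: "u \<ge> 0"
  defines "f \<equiv> \<lambda>u. exp (- \<beta> * u) * ml_series c d (\<mu> + 1) u"
  shows "f u = exp (- \<beta> * u) * (1 + c * integral {0..u} (ml_series c d (\<mu> + 1)))
           + d * integral {0..u} (\<lambda>s. exp (- \<beta> * (u - s)) * power_kernel \<mu> (u - s) * f s)"
proof -
  define g where "g = ml_series c d (\<mu> + 1)"
  define M where "M = integral {0..u} (\<lambda>s. power_kernel \<mu> (u - s) * g s)"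
  have "((\<lambda>s. power_kernel \<mu> (u - s) * g s) has_integral M) {0..u}"
    using ml_series_convolution(1)[of "\<mu> + 1" \<mu> u c d] \<mu> u unfolding M_def g_def
    by (auto simp: integral_unique)
  then have "((\<lambda>s. exp (- \<beta> * u) * (power_kernel \<mu> (u - s) * g s)) has_integral exp (- \<beta> * u) * M) {0..u}"
    by (rule has_integral_mult_right)
  moreover have "exp (- \<beta> * u) * (power_kernel \<mu> (u - s) * g s)
      = exp (- \<beta> * (u - s)) * power_kernel \<mu> (u - s) * f s" for s
  proof -
    have "exp (- \<beta> * (u - s)) * exp (- \<beta> * s) = exp (- \<beta> * u)"
      by (simp add: mult_exp_exp algebra_simps)
    then show ?thesis unfolding f_def g_def by (metis mult.assoc mult.commute)
  qed
  ultimately have "((\<lambda>s. exp (- \<beta> * (u - s)) * power_kernel \<mu> (u - s) * f s) has_integral exp (- \<beta> * u) * M) {0..u}"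
    by (simp only:)
  then show ?thesis
    using ml_series_integral_equation[OF \<mu> u, of c d] unfolding f_def g_def M_def
    by (simp add: integral_unique algebra_simps)
qed

lemma exp_ml_series_integrated_equation:
  fixes \<alpha> \<beta> \<mu> \<rho> t :: real
  assumes \<mu>: "\<mu> > 0" and t: "t \<ge> 0"
  defines "f \<equiv> \<lambda>u. exp (- \<beta> * u) * ml_series (\<rho> + \<beta>) (\<alpha> * \<rho>) (\<mu> + 1) u"
    and "a \<equiv> \<lambda>u. exp (- \<beta> * u) * power_kernel \<mu> u"
  shows "f t - 1 = \<rho> * integral {0..t} f + \<alpha> * \<rho> * integral {0..t} (\<lambda>s. a (t - s) * f s)
           + \<alpha> * \<rho> * \<beta> * integral {0..t} (\<lambda>s. integral {0..t - s} a * f s)"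
proof -
  define c where "c = \<rho> + \<beta>"
  define d where "d = \<alpha> * \<rho>"
  define g where "g = ml_series c d (\<mu> + 1)"
  define E where "E u = exp (- \<beta> * u)" for u
  define W where "W u = E u * integral {0..u} g" for u
  define M where "M u = integral {0..u} (\<lambda>s. a (u - s) * f s)" for u
  have f_eq: "f u = E u + c * W u + d * M u" if "u \<ge> 0" for u
    using exp_ml_series_equation[OF \<mu> that, where c=c and d=d and \<beta>=\<beta>]
    unfolding f_def c_def d_def W_def M_def a_def E_def g_def by (simp add: algebra_simps)
  have g_cont: "continuous_on {0..t} g"
    unfolding g_def using \<mu> by (intro continuous_on_subset[OF continuous_on_ml_series]) auto
  have f_cont: "continuous_on {0..t} f"
    unfolding f_def using \<mu> by (intro continuous_on_subset[OF continuous_on_exp_ml_series]) auto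
  have W_cont: "continuous_on {0..t} W"
    unfolding W_def E_def using g_cont
    by (intro continuous_intros indefinite_integral_continuous_1 integrable_continuous_interval)
  define IF where "IF = integral {0..t} f"
  define IE where "IE = integral {0..t} E"
  define IW where "IW = integral {0..t} W"
  define Q where "Q = integral {0..t} (\<lambda>s. integral {0..t - s} a * f s)"
  have HF: "(f has_integral IF) {0..t}" and HE: "(E has_integral IE) {0..t}" and HW: "(W has_integral IW) {0..t}"
    unfolding IF_def IE_def IW_def E_def using f_cont W_cont
    by (auto intro!: integrable_integral integrable_continuous_interval continuous_intros)
  have W_t: "W t = IF - \<beta> * IW"
    using has_integral_exp_weighted_primitive[OF g_cont t, of \<beta>] has_integral_diff[OF HF has_integral_mult_right[OF HW]]
    unfolding W_def E_def f_def g_def c_def d_def by (auto dest: has_integral_unique)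
  have E_t: "E t = 1 - \<beta> * IE"
    using has_integral_exp_neg[OF t, of \<beta>] has_integral_mult_right[OF HE, of "- \<beta>"]
    unfolding E_def by (auto dest: has_integral_unique)
  have "(M has_integral Q) {0..t}"
    unfolding M_def Q_def
    by (rule has_integral_convolution_primitive[OF _ _ f_cont t])
      (use \<mu> continuous_on_exp_power_kernel[of \<mu> \<beta>] in \<open>auto simp: a_def power_kernel_at_0\<close>)
  moreover have "((\<lambda>x. d * M x) has_integral IF - IE - c * IW) {0..t}"
    by (rule has_integral_eq[OF _ has_integral_diff[OF has_integral_diff[OF HF HE] has_integral_mult_right[OF HW]]])
      (simp add: f_eq)
  ultimately have dQ: "d * Q = IF - IE - c * IW"
    using has_integral_mult_right has_integral_unique by blast
  have "\<rho> * IF + d * M t + d * \<beta> * Q = \<rho> * IF + (f t - E t - c * W t) + \<beta> * (d * Q)"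
    using f_eq[OF t] by simp
  also have "\<dots> = \<rho> * IF + (f t - E t - c * W t) + \<beta> * (IF - IE - c * IW)"
    by (simp only: dQ)
  also have "\<dots> = f t - 1"
    unfolding W_t E_t c_def by (simp add: algebra_simps)
  finally show ?thesis by (simp add: IF_def M_def Q_def d_def)
qed

lemma exp_ml_series_resolvent_equation:
  fixes \<alpha> \<beta> \<mu> \<rho> t :: real
  assumes \<mu>: "\<mu> > 0" and t: "t \<ge> 0"
  defines "f \<equiv> \<lambda>u. exp (- \<beta> * u) * ml_series (\<rho> + \<beta>) (\<alpha> * \<rho>) (\<mu> + 1) u"
  shows "((\<lambda>s. (1 + kernel_int \<alpha> \<beta> \<mu> (t - s)) * (\<rho> * f s)) has_integral f t - 1) {0..t}"
proof -
  define a where "a u = exp (- \<beta> * u) * power_kernel \<mu> u" for u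
  define A where "A r = integral {0..r} a" for r
  have f_cont: "continuous_on {0..t} f"
    unfolding f_def using \<mu> by (intro continuous_on_subset[OF continuous_on_exp_ml_series]) auto
  have a_cont: "continuous_on {0..} a"
    unfolding a_def using \<mu> by (intro continuous_on_exp_power_kernel) simp
  have A_cont: "continuous_on {0..t} A"
    unfolding A_def
    by (intro indefinite_integral_continuous_1 integrable_continuous_interval continuous_on_subset[OF a_cont]) auto
  have "((\<lambda>s. \<rho> * f s + \<alpha> * \<rho> * (a (t - s) * f s) + \<alpha> * \<rho> * \<beta> * (A (t - s) * f s)) has_integral
      \<rho> * integral {0..t} f + \<alpha> * \<rho> * integral {0..t} (\<lambda>s. a (t - s) * f s)
      + \<alpha> * \<rho> * \<beta> * integral {0..t} (\<lambda>s. A (t - s) * f s)) {0..t}"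
    using f_cont
    by (intro has_integral_add has_integral_mult_right integrable_integral integrable_continuous_interval
        continuous_intros continuous_on_compose2[OF a_cont] continuous_on_compose2[OF A_cont]) auto
  then have "((\<lambda>s. \<rho> * f s + \<alpha> * \<rho> * (a (t - s) * f s) + \<alpha> * \<rho> * \<beta> * (A (t - s) * f s)) has_integral
      f t - 1) {0..t}"
    using exp_ml_series_integrated_equation[OF \<mu> t, of \<beta> \<rho> \<alpha>]
    unfolding f_def a_def A_def by simp
  moreover have "\<rho> * f s + \<alpha> * \<rho> * (a (t - s) * f s) + \<alpha> * \<rho> * \<beta> * (A (t - s) * f s)
      = (1 + kernel_int \<alpha> \<beta> \<mu> (t - s)) * (\<rho> * f s)" if "s \<in> {0..t}" for s
    using kernel_int_eq[OF \<mu>, of "t - s" \<alpha> \<beta>] that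
    unfolding a_def A_def by (simp add: algebra_simps)
  ultimately show ?thesis by (rule has_integral_eq[rotated]) auto
qed

section \<open>Resolvent families of scalar operators\<close>

text \<open>Iterating the equation gives \<open>\<parallel>w t\<parallel> \<le> m C\<^sup>n t\<^sup>n / n!\<close>.\<close>
lemma volterra_homogeneous_eq_0:
  fixes w :: "real \<Rightarrow> 'a::banach" and k :: "real \<Rightarrow> real"
  assumes w: "continuous_on {0..T} w" and k: "\<And>r. r \<in> {0..T} \<Longrightarrow> \<bar>k r\<bar> \<le> C"
    and eq: "\<And>t. t \<in> {0..T} \<Longrightarrow> ((\<lambda>s. k (t - s) *\<^sub>R w s) has_integral w t) {0..t}"
    and t: "t \<in> {0..T}"
  shows "w t = 0"
proof -
  obtain m where m: "m \<ge> 0" "\<And>x. x \<in> {0..T} \<Longrightarrow> norm (w x) \<le> m"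
    using continuous_on_compact_bound[OF compact_Icc w] by (metis less_imp_le)
  have C: "C \<ge> 0" using k[of 0] t by (auto intro: order_trans[OF abs_ge_zero])
  have iterate: "norm (w t) \<le> m * C^n * power_kernel (real n) t" if "t \<in> {0..T}" for n t
    using that
  proof (induction n arbitrary: t)
    case 0
    then show ?case using m by simp
  next
    case (Suc n)
    have kernels: "((\<lambda>s. (m * C^Suc n) * (power_kernel 0 (t - s) * power_kernel (real n) s)) has_integral
        (m * C^Suc n) * power_kernel (real (Suc n)) t) {0..t}"
      using has_integral_power_kernel_convolution[of 0 "real n" t] Suc.prems
      by (intro has_integral_mult_right) (auto simp: add_ac)
    have "w t = integral {0..t} (\<lambda>s. k (t - s) *\<^sub>R w s)"
      using eq[OF Suc.prems] by (simp add: integral_unique)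
    also have "norm \<dots> \<le> integral {0..t} (\<lambda>s. (m * C^Suc n) * (power_kernel 0 (t - s) * power_kernel (real n) s))"
    proof (rule integral_norm_bound_integral)
      fix s assume s: "s \<in> {0..t}"
      then have "s \<in> {0..T}" "t - s \<in> {0..T}" using Suc.prems by auto
      then have "\<bar>k (t - s)\<bar> * norm (w s) \<le> C * (m * C^n * power_kernel (real n) s)"
        using k Suc.IH C by (intro mult_mono) auto
      then show "norm (k (t - s) *\<^sub>R w s) \<le> (m * C^Suc n) * (power_kernel 0 (t - s) * power_kernel (real n) s)"
        by (simp add: mult_ac)
    qed (use eq[OF Suc.prems] kernels in blast)+
    also have "\<dots> = m * C^Suc n * power_kernel (real (Suc n)) t"
      by (rule integral_unique[OF kernels])
    finally show ?case .
  qed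
  define l where "l = 2 * C + 1"
  have l: "l > 0" "norm (C / l) < 1" using C by (simp_all add: l_def)
  have "norm (w t) \<le> m * exp 2 * exp (l * t) * (C / l)^n" for n
  proof -
    have "m * C^n * power_kernel (real n) t \<le> m * C^n * (exp 2 * exp (l * t) / l powr real n)"
      using power_kernel_le_exp[of t "real n" l] t l m C by (intro mult_left_mono) auto
    then have "norm (w t) \<le> m * C^n * (exp 2 * exp (l * t) / l powr real n)"
      using iterate[OF t, of n] by linarith
    then show ?thesis using l by (simp add: powr_realpow power_divide mult_ac)
  qed
  moreover have "(\<lambda>n. m * exp 2 * exp (l * t) * (C / l)^n) \<longlonglongrightarrow> 0"
    by (intro tendsto_mult_right_zero LIMSEQ_power_zero l)
  ultimately have "norm (w t) \<le> 0" by (intro LIMSEQ_le_const) auto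
  then show ?thesis by simp
qed

lemma resolvent_family_scaleR_unique:
  fixes S S' :: "real \<Rightarrow> 'a::banach \<Rightarrow>\<^sub>L 'a"
  assumes \<mu>: "\<mu> > 0"
    and S: "resolvent_family \<alpha> \<beta> \<mu> UNIV (\<lambda>x. \<rho> *\<^sub>R x) S"
    and S': "resolvent_family \<alpha> \<beta> \<mu> UNIV (\<lambda>x. \<rho> *\<^sub>R x) S'" and t: "t \<ge> 0"
  shows "S t = S' t"
proof (rule blinfun_eqI)
  fix x :: 'a
  define k where "k r = (1 + kernel_int \<alpha> \<beta> \<mu> r) * \<rho>" for r
  define w where "w u = S u x - S' u x" for u
  have "continuous_on {0..t} k"
    unfolding k_def by (intro continuous_intros continuous_on_kernel_int \<mu>)
  then obtain C where C: "\<And>r. r \<in> {0..t} \<Longrightarrow> \<bar>k r\<bar> \<le> C"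
    using continuous_on_compact_bound[OF compact_Icc] by (metis real_norm_def)
  have "continuous_on {0..} (\<lambda>u. S u x)" "continuous_on {0..} (\<lambda>u. S' u x)"
    using S S' unfolding resolvent_family_def by blast+
  then have w_cont: "continuous_on {0..t} w"
    unfolding w_def by (intro continuous_on_diff) (auto elim: continuous_on_subset)
  have w_eq: "((\<lambda>u. k (\<tau> - u) *\<^sub>R w u) has_integral w \<tau>) {0..\<tau>}" if "\<tau> \<in> {0..t}" for \<tau>
  proof -
    have "((\<lambda>u. (1 + kernel_int \<alpha> \<beta> \<mu> (\<tau> - u)) *\<^sub>R \<rho> *\<^sub>R S u x) has_integral S \<tau> x - x) {0..\<tau>}"
      "((\<lambda>u. (1 + kernel_int \<alpha> \<beta> \<mu> (\<tau> - u)) *\<^sub>R \<rho> *\<^sub>R S' u x) has_integral S' \<tau> x - x) {0..\<tau>}"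
      using S S' that unfolding resolvent_family_def by auto
    from has_integral_diff[OF this] show ?thesis
      unfolding w_def k_def by (simp add: scaleR_diff_right)
  qed
  have "w t = 0"
    using C t by (intro volterra_homogeneous_eq_0[OF w_cont _ w_eq]) auto
  then show "S t x = S' t x" unfolding w_def by simp
qed

lemma resolvent_family_scaleR_id:
  fixes f :: "real \<Rightarrow> real"
  assumes f_cont: "continuous_on {0..} f" and f0: "f 0 = 1"
    and f_eq: "\<And>t. t \<ge> 0 \<Longrightarrow>
      ((\<lambda>s. (1 + kernel_int \<alpha> \<beta> \<mu> (t - s)) * (\<rho> * f s)) has_integral f t - 1) {0..t}"
  shows "resolvent_family \<alpha> \<beta> \<mu> (UNIV :: 'a::banach set) (\<lambda>x. \<rho> *\<^sub>R x) (\<lambda>t. f t *\<^sub>R id_blinfun)"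
proof -
  have apply_eq: "(f t *\<^sub>R id_blinfun) x = f t *\<^sub>R (x :: 'a)" for t x
    by (simp add: scaleR_blinfun.rep_eq)
  have "continuous_on {0..} (\<lambda>t. f t *\<^sub>R x)" for x :: 'a
    by (intro continuous_on_scaleR f_cont continuous_on_const)
  moreover have "((\<lambda>s. (1 + kernel_int \<alpha> \<beta> \<mu> (t - s)) *\<^sub>R \<rho> *\<^sub>R f s *\<^sub>R x) has_integral f t *\<^sub>R x - x) {0..t}"
    if "t \<ge> 0" for t and x :: 'a
    using has_integral_scaleR_left[OF f_eq[OF that], of x] by (simp add: algebra_simps)
  ultimately show ?thesis
    unfolding resolvent_family_def apply_eq using f0 by (simp add: blinfun_eqI)
qed

lemma exp_bounded_scaleR_id:
  fixes f :: "real \<Rightarrow> real"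
  assumes "M > 0" and "\<And>t. t \<ge> 0 \<Longrightarrow> \<bar>f t\<bar> \<le> M * exp (\<omega> * t)"
  shows "exp_bounded (\<lambda>t. f t *\<^sub>R (id_blinfun :: 'a::real_normed_vector \<Rightarrow>\<^sub>L 'a))"
  unfolding exp_bounded_def
proof (intro exI conjI allI impI)
  fix t :: real assume "t \<ge> 0"
  have "norm (f t *\<^sub>R (id_blinfun :: 'a \<Rightarrow>\<^sub>L 'a)) \<le> \<bar>f t\<bar>"
    using mult_left_le[OF norm_blinfun_id_le abs_ge_zero] by simp
  also have "\<dots> \<le> M * exp (\<omega> * t)" using assms(2) \<open>t \<ge> 0\<close> .
  finally show "norm (f t *\<^sub>R (id_blinfun :: 'a \<Rightarrow>\<^sub>L 'a)) \<le> M * exp (\<omega> * t)" .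
qed (rule assms(1))

lemma resolvent_family_cong:
  assumes "\<And>t. t \<ge> 0 \<Longrightarrow> S t = S' t"
  shows "resolvent_family \<alpha> \<beta> \<mu> D A S \<longleftrightarrow> resolvent_family \<alpha> \<beta> \<mu> D A S'"
proof -
  have "continuous_on {0..} (\<lambda>t. S t x) \<longleftrightarrow> continuous_on {0..} (\<lambda>t. S' t x)" for x
    by (rule continuous_on_cong) (auto simp: assms)
  moreover have "((\<lambda>s. (1 + kernel_int \<alpha> \<beta> \<mu> (t - s)) *\<^sub>R A (S s x)) has_integral S t x - x) {0..t}
      \<longleftrightarrow> ((\<lambda>s. (1 + kernel_int \<alpha> \<beta> \<mu> (t - s)) *\<^sub>R A (S' s x)) has_integral S' t x - x) {0..t}"
    if "t \<ge> 0" for t x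
  proof -
    have "((\<lambda>s. (1 + kernel_int \<alpha> \<beta> \<mu> (t - s)) *\<^sub>R A (S s x)) has_integral y) {0..t}
        \<longleftrightarrow> ((\<lambda>s. (1 + kernel_int \<alpha> \<beta> \<mu> (t - s)) *\<^sub>R A (S' s x)) has_integral y) {0..t}" for y
      by (rule has_integral_cong) (simp add: assms)
    then show ?thesis using assms[OF that] by simp
  qed
  ultimately show ?thesis
    unfolding resolvent_family_def using assms by (auto simp: assms)
qed

lemma exp_bounded_cong:
  assumes "\<And>t. t \<ge> 0 \<Longrightarrow> S t = S' t"
  shows "exp_bounded S \<longleftrightarrow> exp_bounded S'"
  unfolding exp_bounded_def using assms by auto

lemma exp_ml_series_resolvent_family:
  assumes \<mu>: "\<mu> > 0"
  shows "resolvent_family \<alpha> \<beta> \<mu> (UNIV :: 'a::banach set) (\<lambda>x. \<rho> *\<^sub>R x)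
           (\<lambda>t. (exp (- \<beta> * t) * ml_series (\<rho> + \<beta>) (\<alpha> * \<rho>) (\<mu> + 1) t) *\<^sub>R id_blinfun)"
  using \<mu> continuous_on_exp_ml_series[of "\<mu> + 1" \<beta> "\<rho> + \<beta>" "\<alpha> * \<rho>"] ml_series_at_0[OF \<mu>]
    exp_ml_series_resolvent_equation[OF \<mu>]
  by (intro resolvent_family_scaleR_id) auto

lemma exp_bounded_exp_ml_series:
  assumes e: "e \<ge> 1"
  shows "exp_bounded (\<lambda>t. (exp (- \<beta> * t) * ml_series c d e t) *\<^sub>R (id_blinfun :: 'a::real_normed_vector \<Rightarrow>\<^sub>L 'a))"
proof (rule exp_bounded_scaleR_id)
  fix t :: real assume t: "t \<ge> 0"
  have "\<bar>exp (- \<beta> * t) * ml_series c d e t\<bar> = exp (- \<beta> * t) * \<bar>ml_series c d e t\<bar>"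
    by (simp add: abs_mult)
  also have "\<dots> \<le> exp (- \<beta> * t) * (4 * exp 2 * exp (ml_rate c d * t))"
    using ml_series_abs_le[OF e t, of c d] by (intro mult_left_mono) auto
  also have "\<dots> = 4 * exp 2 * exp ((ml_rate c d - \<beta>) * t)"
    by (simp add: mult_exp_exp algebra_simps)
  finally show "\<bar>exp (- \<beta> * t) * ml_series c d e t\<bar> \<le> 4 * exp 2 * exp ((ml_rate c d - \<beta>) * t)" .
qed simp

theorem proposition5p1:
  fixes \<alpha> \<beta> \<mu> \<rho> :: real
  assumes "\<alpha> \<noteq> 0" and "0 < \<mu>" and "\<mu> \<le> 1" and "\<beta> \<ge> 0"
    and "\<alpha> > 0 \<or> (\<alpha> < 0 \<and> \<alpha> + \<beta> powr \<mu> \<ge> \<bar>\<alpha>\<bar>)"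
    and conv: "\<forall>t\<ge>0. summable (\<lambda>k. (\<rho> + \<beta>) ^ k * t ^ k *
                 prabhakar_ML (real k + 1) (\<mu> + 1) (real k + 1) (\<alpha> * \<rho> * t powr (\<mu> + 1)))"
  defines "s \<equiv> (\<lambda>t. exp (- \<beta> * t) * (\<Sum>k. (\<rho> + \<beta>) ^ k * t ^ k *
                 prabhakar_ML (real k + 1) (\<mu> + 1) (real k + 1) (\<alpha> * \<rho> * t powr (\<mu> + 1))))"
  shows "resolvent_family \<alpha> \<beta> \<mu> (UNIV :: 'a::banach set) (\<lambda>x. \<rho> *\<^sub>R x)
           (\<lambda>t. s t *\<^sub>R id_blinfun)
       \<and> exp_bounded (\<lambda>t. s t *\<^sub>R (id_blinfun :: 'a \<Rightarrow>\<^sub>L 'a))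
       \<and> (\<forall>S. resolvent_family \<alpha> \<beta> \<mu> (UNIV :: 'a set) (\<lambda>x. \<rho> *\<^sub>R x) S \<and> exp_bounded S
              \<longrightarrow> (\<forall>t\<ge>0. S t = s t *\<^sub>R id_blinfun))"
proof -
  have \<mu>: "\<mu> > 0" by fact
  have s_eq: "s t *\<^sub>R id_blinfun
      = (exp (- \<beta> * t) * ml_series (\<rho> + \<beta>) (\<alpha> * \<rho>) (\<mu> + 1) t) *\<^sub>R (id_blinfun :: 'a \<Rightarrow>\<^sub>L 'a)"
    if "t \<ge> 0" for t
    unfolding s_def using prabhakar_series_eq_ml_series[OF that \<mu>] by simp
  have family: "resolvent_family \<alpha> \<beta> \<mu> (UNIV :: 'a set) (\<lambda>x. \<rho> *\<^sub>R x) (\<lambda>t. s t *\<^sub>R id_blinfun)"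
    by (subst resolvent_family_cong[OF s_eq]) (use exp_ml_series_resolvent_family[OF \<mu>] in auto)
  moreover have "exp_bounded (\<lambda>t. s t *\<^sub>R (id_blinfun :: 'a \<Rightarrow>\<^sub>L 'a))"
    by (subst exp_bounded_cong[OF s_eq]) (use exp_bounded_exp_ml_series[of "\<mu> + 1"] \<mu> in auto)
  moreover have "\<forall>t\<ge>0. S t = s t *\<^sub>R id_blinfun"
    if "resolvent_family \<alpha> \<beta> \<mu> (UNIV :: 'a set) (\<lambda>x. \<rho> *\<^sub>R x) S" for S
    using resolvent_family_scaleR_unique[OF \<mu> that family] by blast
  ultimately show ?thesis by blast
qed

end
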